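(* Let $m\ge3$, let $E^m$ and $O^m$ be the sets of even-parity and odd-parity $m$-bit strings, and let $A\subseteq E^m$. For $n\ge1$, let $m$ parties (the first being Alice) hold $X_j=(x^j_1,\dots,x^j_n)\in\{0,1\}^n$, $j=1,\dots,m$, under the promise that $x_i^1x_i^2\cdots x_i^m\in A\cup O^m$ for every $i$, and let $g_A(X_1,\dots,X_m)=\bigoplus_{i=1}^n t_A(x_i^1\cdots x_i^m)$, where $t_A(w)=1$ if $w\in A$ and $0$ otherwise. Then $g_A$ can be computed by a distributed protocol using only local classical operations, no a priori quantum entanglement, and $m-1$ classical bits of communication in total, at the end of which Alice knows the value of $g_A(X_1,\dots,X_m)$. *)

theory Defs
  imports Main
begin

(* m-bit strings are bool lists of length m; True = bit 1 *)
definition even_strings :: "nat \<Rightarrow> bool list set" where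
  "even_strings m = {w. length w = m \<and> even (length (filter id w))}"

definition odd_strings :: "nat \<Rightarrow> bool list set" where
  "odd_strings m = {w. length w = m \<and> odd (length (filter id w))}"

definition t_A :: "bool list set \<Rightarrow> bool list \<Rightarrow> bool" where
  "t_A A w = (w \<in> A)"

(* parties are 0..m-1, party 0 is Alice; X j = (x^j_1,...,x^j_n) *)
definition column :: "(nat \<Rightarrow> bool list) \<Rightarrow> nat \<Rightarrow> nat \<Rightarrow> bool list" where
  "column X m i = map (\<lambda>j. X j ! i) [0..<m]"

definition g_A :: "bool list set \<Rightarrow> nat \<Rightarrow> nat \<Rightarrow> (nat \<Rightarrow> bool list) \<Rightarrow> bool" where
  "g_A A m n X = foldr (\<lambda>i acc. t_A A (column X m i) \<noteq> acc) [0..<n] False"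

(* Deterministic classical point-to-point protocol: in round r, party sender r
   sends one bit to party receiver r; the bit is computed locally from the
   sender's own input and the sender's view (all bits it sent/received so far,
   tagged with their round numbers). *)
record protocol =
  rounds :: nat
  sender :: "nat \<Rightarrow> nat"
  receiver :: "nat \<Rightarrow> nat"
  msg :: "nat \<Rightarrow> bool list \<Rightarrow> (nat \<times> bool) list \<Rightarrow> bool"
  out :: "bool list \<Rightarrow> (nat \<times> bool) list \<Rightarrow> bool"

definition view :: "protocol \<Rightarrow> nat \<Rightarrow> nat \<Rightarrow> bool list \<Rightarrow> (nat \<times> bool) list" where
  "view P p r tr = map (\<lambda>k. (k, tr ! k))
      (filter (\<lambda>k. sender P k = p \<or> receiver P k = p) [0..<r])"

primrec transcript :: "protocol \<Rightarrow> (nat \<Rightarrow> bool list) \<Rightarrow> nat \<Rightarrow> bool list" where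
  "transcript P X 0 = []"
| "transcript P X (Suc r) = transcript P X r @
      [msg P r (X (sender P r)) (view P (sender P r) r (transcript P X r))]"

definition valid_protocol :: "nat \<Rightarrow> protocol \<Rightarrow> bool" where
  "valid_protocol m P \<longleftrightarrow> (\<forall>r < rounds P. sender P r < m \<and> receiver P r < m \<and> sender P r \<noteq> receiver P r)"

definition alice_output :: "protocol \<Rightarrow> (nat \<Rightarrow> bool list) \<Rightarrow> bool" where
  "alice_output P X = out P (X 0) (view P 0 (rounds P) (transcript P X (rounds P)))"

end

theory Submission
  imports Defs
begin

text \<open>Under the promise every column either lies in \<open>A\<close>, hence has even parity, or has odd
  parity, so \<open>t_A\<close> of a column is the negated parity of that column. Therefore \<open>g_A\<close> is the
  parity of \<open>n\<close> XOR the parity of the whole \<open>m \<times> n\<close> bit matrix, which can also be computed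
  row by row: each of the \<open>m - 1\<close> other parties sends the parity of its own row to Alice,
  and she adds these bits to the parity of her row and of \<open>n\<close>. This needs only \<open>m \<ge> 1\<close>.\<close>

definition parity :: "bool list \<Rightarrow> bool" where
  "parity w \<longleftrightarrow> odd (length (filter id w))"

lemma parity_Nil [simp]: "parity [] = False"
  and parity_Cons [simp]: "parity (b # w) = (b \<noteq> parity w)"
  by (simp_all add: parity_def)

lemma parity_map_xor: "parity (map (\<lambda>x. f x \<noteq> g x) xs) = (parity (map f xs) \<noteq> parity (map g xs))"
  by (induction xs) auto

lemma parity_map_Not: "parity (map (\<lambda>x. \<not> f x) xs) = (odd (length xs) \<noteq> parity (map f xs))"
  by (induction xs) auto

lemma parity_map_False: "parity (map (\<lambda>_. False) xs) = False"
  by (induction xs) auto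

lemma parity_map_parity_commute:
  "parity (map (\<lambda>i. parity (map (\<lambda>j. M i j) js)) is) =
   parity (map (\<lambda>j. parity (map (\<lambda>i. M i j) is)) js)"
proof (induction "is")
  case Nil
  show ?case by (simp add: parity_map_False)
next
  case (Cons i "is")
  have "parity (map (\<lambda>j. parity (map (\<lambda>i. M i j) (i # is))) js) =
        parity (map (\<lambda>j. M i j \<noteq> parity (map (\<lambda>i. M i j) is)) js)"
    by (simp only: list.map parity_Cons)
  also have "\<dots> = (parity (map (M i) js) \<noteq> parity (map (\<lambda>j. parity (map (\<lambda>i. M i j) is)) js))"
    by (rule parity_map_xor)
  finally show ?case using Cons.IH by simp
qed

lemma foldr_xor_eq_parity: "foldr (\<lambda>x acc. f x \<noteq> acc) xs False = parity (map f xs)"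
  by (induction xs) auto

lemma t_A_eq_Not_parity:
  assumes "A \<subseteq> even_strings m" and "w \<in> A \<union> odd_strings m"
  shows "t_A A w = (\<not> parity w)"
  using assms by (auto simp: t_A_def parity_def even_strings_def odd_strings_def)

lemma g_A_eq_parity_of_row_parities:
  assumes rows: "\<forall>j<m. length (X j) = n"
    and A: "A \<subseteq> even_strings m"
    and promise: "\<forall>i<n. column X m i \<in> A \<union> odd_strings m"
  shows "g_A A m n X = (odd n \<noteq> parity (map (\<lambda>j. parity (X j)) [0..<m]))"
proof -
  have "g_A A m n X = parity (map (\<lambda>i. \<not> parity (column X m i)) [0..<n])"
    unfolding g_A_def foldr_xor_eq_parity
    using t_A_eq_Not_parity[OF A] promise by (intro arg_cong[where f = parity]) auto
  also have "\<dots> = (odd n \<noteq> parity (map (\<lambda>i. parity (map (\<lambda>j. X j ! i) [0..<m])) [0..<n]))"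
    by (simp add: parity_map_Not column_def)
  also have "parity (map (\<lambda>i. parity (map (\<lambda>j. X j ! i) [0..<m])) [0..<n]) =
             parity (map (\<lambda>j. parity (map (\<lambda>i. X j ! i) [0..<n])) [0..<m])"
    by (rule parity_map_parity_commute)
  also have "\<dots> = parity (map (\<lambda>j. parity (X j)) [0..<m])"
    using rows by (intro arg_cong[where f = parity] map_cong refl) (metis atLeastLessThan_iff map_nth set_upt)
  finally show ?thesis .
qed

definition parity_protocol :: "nat \<Rightarrow> nat \<Rightarrow> protocol" where
  "parity_protocol m n =
     \<lparr>rounds = m - 1, sender = Suc, receiver = (\<lambda>_. 0),
      msg = (\<lambda>_ x _. parity x),
      out = (\<lambda>x v. odd n \<noteq> parity (parity x # map snd v))\<rparr>"

lemma valid_parity_protocol: "valid_protocol m (parity_protocol m n)"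
  by (auto simp: valid_protocol_def parity_protocol_def)

lemma transcript_parity_protocol:
  "transcript (parity_protocol m n) X r = map (\<lambda>k. parity (X (Suc k))) [0..<r]"
  by (induction r) (simp_all add: parity_protocol_def)

lemma alice_output_parity_protocol:
  assumes "m \<ge> 1"
  shows "alice_output (parity_protocol m n) X = (odd n \<noteq> parity (map (\<lambda>j. parity (X j)) [0..<m]))"
proof -
  obtain m' where m: "m = Suc m'"
    using assms by (cases m) auto
  let ?P = "parity_protocol m n"
  have "view ?P 0 (rounds ?P) (transcript ?P X (rounds ?P)) =
        map (\<lambda>k. (k, parity (X (Suc k)))) [0..<m - 1]"
    unfolding view_def transcript_parity_protocol by (simp add: parity_protocol_def)
  then have "alice_output ?P X = (odd n \<noteq> parity (parity (X 0) # map (\<lambda>k. parity (X (Suc k))) [0..<m - 1]))"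
    unfolding alice_output_def by (simp add: parity_protocol_def o_def)
  also have "parity (X 0) # map (\<lambda>k. parity (X (Suc k))) [0..<m - 1] = map (\<lambda>j. parity (X j)) [0..<m]"
    unfolding m by (simp only: map_upt_Suc diff_Suc_1)
  finally show ?thesis .
qed

theorem theorem7:
  fixes m n :: nat and A :: "bool list set"
  assumes "m \<ge> 3" and "A \<subseteq> even_strings m" and "n \<ge> 1"
  shows "\<exists>P. valid_protocol m P \<and> rounds P = m - 1 \<and>
           (\<forall>X. (\<forall>j<m. length (X j) = n) \<and> (\<forall>i<n. column X m i \<in> A \<union> odd_strings m)
                 \<longrightarrow> alice_output P X = g_A A m n X)"
proof (intro exI conjI allI impI)
  show "valid_protocol m (parity_protocol m n)"
    by (rule valid_parity_protocol)
  show "rounds (parity_protocol m n) = m - 1"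
    by (simp add: parity_protocol_def)
  fix X
  assume inputs: "(\<forall>j<m. length (X j) = n) \<and> (\<forall>i<n. column X m i \<in> A \<union> odd_strings m)"
  have "alice_output (parity_protocol m n) X = (odd n \<noteq> parity (map (\<lambda>j. parity (X j)) [0..<m]))"
    using assms(1) by (intro alice_output_parity_protocol) simp
  also have "\<dots> = g_A A m n X"
    using inputs assms(2) by (simp add: g_A_eq_parity_of_row_parities)
  finally show "alice_output (parity_protocol m n) X = g_A A m n X" .
qed

end
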